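(* Let $X$ be a Banach space with an extended $\lambda$-approximative basis $(P_\alpha)_{\alpha\in\mathscr{D}}$. Assume that $K$ is a separable subset of $X$ and $(y_n)$ is a semi-normalized weakly null sequence in $K$. Then there exist an increasing sequence $(\alpha_{m_i})_{i\ge0}$ in $\mathscr{D}$ and a basic subsequence $(x_{n_i})$ of $(y_n)$ such that (1) $\lim_{i\to\infty}\big\|P_{\alpha_{m_i}}\big(\frac1N\sum_{k=1}^N x_{n_{i+k}}\big)\big\|=0$ for all $N\in\mathbb{N}$; (2) $\lim_{i\to\infty}\|x_{n_i}-P_{\alpha_{m_i}}(x_{n_i})\|=0$; (3) $\lim_{i\to\infty}\|x-P_{\alpha_{m_i}}(x)\|=0$ for all $x\in K$.
   Context: $X$ has an extended $\lambda$-approximative basis ($\lambda\ge1$) if there is a net $(P_\alpha)_{\alpha\in\mathscr{D}}$ of finite-rank bounded linear operators on $X$ with $x=\lim_\alpha P_\alpha(x)$ for all $x\in X$ and $\sup_\alpha\|P_\alpha\|\le\lambda$. A sequence is semi-normalized if $0<\inf_n\|y_n\|\le\sup_n\|y_n\|<\infty$; it is basic if it is a Schauder basis of its closed linear span. *)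

theory Defs
  imports "HOL-Analysis.Analysis"
begin

definition directed_set :: "'d set \<Rightarrow> ('d \<Rightarrow> 'd \<Rightarrow> bool) \<Rightarrow> bool" where
  "directed_set D le \<longleftrightarrow> D \<noteq> {} \<and>
     (\<forall>a\<in>D. le a a) \<and>
     (\<forall>a\<in>D. \<forall>b\<in>D. \<forall>c\<in>D. le a b \<longrightarrow> le b c \<longrightarrow> le a c) \<and>
     (\<forall>a\<in>D. \<forall>b\<in>D. \<exists>c\<in>D. le a c \<and> le b c)"

definition net_tendsto :: "'d set \<Rightarrow> ('d \<Rightarrow> 'd \<Rightarrow> bool) \<Rightarrow> ('d \<Rightarrow> 'a::metric_space) \<Rightarrow> 'a \<Rightarrow> bool" where
  "net_tendsto D le f l \<longleftrightarrow>
     (\<forall>e>0. \<exists>a0\<in>D. \<forall>a\<in>D. le a0 a \<longrightarrow> dist (f a) l < e)"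

definition finite_rank :: "('a::real_vector \<Rightarrow> 'b::real_vector) \<Rightarrow> bool" where
  "finite_rank T \<longleftrightarrow> (\<exists>B. finite B \<and> range T \<subseteq> span B)"

definition ext_approx_basis ::
  "real \<Rightarrow> 'd set \<Rightarrow> ('d \<Rightarrow> 'd \<Rightarrow> bool) \<Rightarrow> ('d \<Rightarrow> 'a::real_normed_vector \<Rightarrow> 'a) \<Rightarrow> bool" where
  "ext_approx_basis lam D le P \<longleftrightarrow>
     lam \<ge> 1 \<and> directed_set D le \<and>
     (\<forall>a\<in>D. bounded_linear (P a) \<and> finite_rank (P a) \<and> onorm (P a) \<le> lam) \<and>
     (\<forall>x. net_tendsto D le (\<lambda>a. P a x) x)"

definition separable_set :: "'a::metric_space set \<Rightarrow> bool" where
  "separable_set K \<longleftrightarrow> (\<exists>C. countable C \<and> C \<subseteq> K \<and> K \<subseteq> closure C)"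

definition semi_normalized :: "(nat \<Rightarrow> 'a::real_normed_vector) \<Rightarrow> bool" where
  "semi_normalized y \<longleftrightarrow> (\<exists>a b. 0 < a \<and> (\<forall>n. a \<le> norm (y n) \<and> norm (y n) \<le> b))"

definition weakly_null :: "(nat \<Rightarrow> 'a::real_normed_vector) \<Rightarrow> bool" where
  "weakly_null y \<longleftrightarrow> (\<forall>f::'a \<Rightarrow> real. bounded_linear f \<longrightarrow> (\<lambda>n. f (y n)) \<longlonglongrightarrow> 0)"

definition basic_seq :: "(nat \<Rightarrow> 'a::real_normed_vector) \<Rightarrow> bool" where
  "basic_seq x \<longleftrightarrow> (\<forall>z\<in>closure (span (range x)).
      \<exists>!c::nat \<Rightarrow> real. (\<lambda>N. \<Sum>i<N. c i *\<^sub>R x i) \<longlonglongrightarrow> z)"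

end

theory Submission
  imports Defs
begin

text \<open>
  A bounded finite-rank operator maps weakly null sequences to norm null ones, since the
  coordinates of its range are bounded functionals. This allows a gliding-hump choice of
  \<open>n i\<close> and \<open>\<beta> i\<close>: \<open>y (n i)\<close> is almost annihilated by all earlier \<open>P (\<beta> j)\<close>, while
  \<open>P (\<beta> i)\<close> almost fixes the earlier \<open>y (n j)\<close> and the first \<open>i\<close> points of a countable
  dense subset of \<open>K\<close>. If the errors are summable and small against \<open>inf \<parallel>y n\<parallel>\<close>, then
  \<open>P (\<beta> p)\<close> reproduces the partial sum up to \<open>p\<close> of any combination of the \<open>y (n i)\<close> up to
  half of its largest partial sum. This yields Grunblum's criterion with constant \<open>2 \<lambda>\<close>.
\<close>

section \<open>Finite-rank operators and weakly null sequences\<close>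

lemma abs_mult_infdist_span_le_norm:
  fixes b v :: "'a::real_normed_vector"
  assumes "v - t *\<^sub>R b \<in> span B"
  shows "\<bar>t\<bar> * infdist b (span B) \<le> norm v"
proof (cases "t = 0")
  case False
  have "b - (1/t) *\<^sub>R v = - (1/t) *\<^sub>R (v - t *\<^sub>R b)"
    using False by (simp add: algebra_simps)
  then have "b - (1/t) *\<^sub>R v \<in> span B"
    using assms by (metis span_scale)
  then have "infdist b (span B) \<le> dist b (b - (1/t) *\<^sub>R v)" by (rule infdist_le)
  also have "\<dots> = norm v / \<bar>t\<bar>" by (simp add: dist_norm divide_inverse mult.commute)
  finally show ?thesis using False by (simp add: field_simps)
qed simp

lemma Cauchy_if_dominated:
  fixes t :: "nat \<Rightarrow> real" and v :: "nat \<Rightarrow> 'a::real_normed_vector"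
  assumes "Cauchy v" and "0 < d" and "0 \<le> c"
    and bound: "\<And>m n. \<bar>t m - t n\<bar> * d \<le> c * norm (v m - v n)"
  shows "Cauchy t"
proof (rule CauchyI)
  fix e :: real assume "e > 0"
  then have "e * d / (c + 1) > 0" using assms(2,3) by simp
  then obtain M where M: "\<forall>m\<ge>M. \<forall>n\<ge>M. norm (v m - v n) < e * d / (c + 1)"
    using CauchyD[OF assms(1)] by blast
  show "\<exists>M. \<forall>m\<ge>M. \<forall>n\<ge>M. norm (t m - t n) < e"
  proof (intro exI allI impI)
    fix m n assume "m \<ge> M" "n \<ge> M"
    then have "\<bar>t m - t n\<bar> * d \<le> c * (e * d / (c + 1))"
      using bound[of m n] M assms(3) by (meson less_imp_le mult_left_mono order_trans)
    also have "\<dots> < e * d" using \<open>e > 0\<close> assms(2,3) by (simp add: field_simps)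
    finally show "norm (t m - t n) < e" using assms(2) by simp
  qed
qed

lemma closed_span_finite:
  fixes B :: "'a::real_normed_vector set"
  assumes "finite B"
  shows "closed (span B)"
  using assms
proof (induction B rule: finite_induct)
  case (insert b B)
  show ?case
  proof (cases "b \<in> span B")
    case True
    then show ?thesis using insert.IH by (simp add: span_redundant)
  next
    case False
    define d where "d = infdist b (span B)"
    have "d > 0" unfolding d_def
      using infdist_pos_not_in_closed[OF insert.IH _ False] span_zero[of B] by blast
    show ?thesis
    proof (rule closed_sequential_limits[THEN iffD2], intro allI impI, elim conjE)
      fix v :: "nat \<Rightarrow> 'a" and l
      assume "\<forall>n. v n \<in> span (insert b B)" and "v \<longlonglongrightarrow> l"
      then have "\<forall>n. \<exists>t. v n - t *\<^sub>R b \<in> span B" by (simp add: span_breakdown_eq)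
      then obtain t where t: "\<And>n. v n - t n *\<^sub>R b \<in> span B" by metis
      have "\<bar>t m - t n\<bar> * d \<le> 1 * norm (v m - v n)" for m n
      proof -
        have "(v m - v n) - (t m - t n) *\<^sub>R b = (v m - t m *\<^sub>R b) - (v n - t n *\<^sub>R b)"
          by (simp add: algebra_simps)
        also have "\<dots> \<in> span B" using t by (simp add: span_diff)
        finally show ?thesis unfolding d_def by (simp add: abs_mult_infdist_span_le_norm)
      qed
      then have "Cauchy t"
        by (rule Cauchy_if_dominated[OF LIMSEQ_imp_Cauchy[OF \<open>v \<longlonglongrightarrow> l\<close>] \<open>d > 0\<close>, rotated]) simp
      then obtain s where "t \<longlonglongrightarrow> s" using Cauchy_convergent_iff convergent_def by blast
      then have "(\<lambda>n. v n - t n *\<^sub>R b) \<longlonglongrightarrow> l - s *\<^sub>R b"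
        by (intro tendsto_intros \<open>v \<longlonglongrightarrow> l\<close>)
      then have "l - s *\<^sub>R b \<in> span B"
        by (rule closed_sequentially[OF insert.IH t])
      then show "l \<in> span (insert b B)" by (auto simp: span_breakdown_eq)
    qed
  qed
qed simp

lemma bounded_linear_coordinate:
  fixes T :: "'a::real_normed_vector \<Rightarrow> 'b::real_normed_vector"
  assumes T: "bounded_linear T" and range: "range T \<subseteq> span (insert b B)"
    and closed: "closed (span B)" and b: "b \<notin> span B"
  obtains \<phi> where "bounded_linear \<phi>" and "\<And>x. T x - \<phi> x *\<^sub>R b \<in> span B"
proof -
  have unique: "s = t" if "T x - s *\<^sub>R b \<in> span B" "T x - t *\<^sub>R b \<in> span B" for x s t
  proof (rule ccontr)
    assume "s \<noteq> t"
    have "(T x - t *\<^sub>R b) - (T x - s *\<^sub>R b) = (s - t) *\<^sub>R b" by (simp add: algebra_simps)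
    then have "(s - t) *\<^sub>R b \<in> span B" using span_diff[OF that(2) that(1)] by simp
    then have "(1 / (s - t)) *\<^sub>R ((s - t) *\<^sub>R b) \<in> span B" by (rule span_scale)
    then show False using \<open>s \<noteq> t\<close> b by simp
  qed
  have "\<forall>x. \<exists>t. T x - t *\<^sub>R b \<in> span B"
    using range by (auto simp: span_breakdown_eq[symmetric])
  then obtain \<phi> where \<phi>: "\<And>x. T x - \<phi> x *\<^sub>R b \<in> span B" by metis
  interpret T: bounded_linear T by fact
  obtain KT where KT: "\<And>x. norm (T x) \<le> norm x * KT" using T.bounded by blast
  have "infdist b (span B) > 0"
    using infdist_pos_not_in_closed[OF closed _ b] span_zero[of B] by blast
  have "bounded_linear \<phi>"
  proof (rule bounded_linear_intro)
    fix x x'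
    have "T (x + x') - (\<phi> x + \<phi> x') *\<^sub>R b = (T x - \<phi> x *\<^sub>R b) + (T x' - \<phi> x' *\<^sub>R b)"
      by (simp add: T.add algebra_simps)
    also have "\<dots> \<in> span B" using \<phi> by (simp add: span_add)
    finally show "\<phi> (x + x') = \<phi> x + \<phi> x'" using unique \<phi> by blast
  next
    fix r x
    have "T (r *\<^sub>R x) - (r * \<phi> x) *\<^sub>R b = r *\<^sub>R (T x - \<phi> x *\<^sub>R b)"
      by (simp add: T.scaleR algebra_simps)
    also have "\<dots> \<in> span B" using \<phi> by (simp add: span_scale)
    finally show "\<phi> (r *\<^sub>R x) = r *\<^sub>R \<phi> x" by (simp add: unique[OF \<phi>])
  next
    fix x
    have "\<bar>\<phi> x\<bar> * infdist b (span B) \<le> norm (T x)" by (rule abs_mult_infdist_span_le_norm[OF \<phi>])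
    also have "\<dots> \<le> norm x * KT" by (rule KT)
    finally show "norm (\<phi> x) \<le> norm x * (KT / infdist b (span B))"
      using \<open>infdist b (span B) > 0\<close> by (simp add: field_simps)
  qed
  then show thesis using that \<phi> by blast
qed

lemma weakly_null_tendsto_zero_span_finite:
  fixes T :: "'a::real_normed_vector \<Rightarrow> 'b::real_normed_vector"
  assumes "finite B" and null: "weakly_null y" and "bounded_linear T" and "range T \<subseteq> span B"
  shows "(\<lambda>n. T (y n)) \<longlonglongrightarrow> 0"
  using assms(1,3,4)
proof (induction B arbitrary: T rule: finite_induct)
  case empty
  then show ?case by (auto simp: image_subset_iff)
next
  case (insert b B)
  show ?case
  proof (cases "b \<in> span B")
    case True
    then show ?thesis using insert by (simp add: span_redundant)
  next
    case False
    obtain \<phi> where \<phi>: "bounded_linear \<phi>" "\<And>x. T x - \<phi> x *\<^sub>R b \<in> span B"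
      using bounded_linear_coordinate[OF insert.prems closed_span_finite[OF insert.hyps(1)] False]
      by blast
    have "bounded_linear (\<lambda>x. T x - \<phi> x *\<^sub>R b)"
      using insert.prems(1) \<phi>(1) by (intro bounded_linear_sub bounded_linear_compose[OF bounded_linear_scaleR_left])
    then have "(\<lambda>n. T (y n) - \<phi> (y n) *\<^sub>R b) \<longlonglongrightarrow> 0"
      using \<phi>(2) by (intro insert.IH) auto
    moreover have "(\<lambda>n. \<phi> (y n)) \<longlonglongrightarrow> 0" using null \<phi>(1) unfolding weakly_null_def by blast
    ultimately have "(\<lambda>n. (T (y n) - \<phi> (y n) *\<^sub>R b) + \<phi> (y n) *\<^sub>R b) \<longlonglongrightarrow> 0 + 0 *\<^sub>R b"
      by (intro tendsto_intros)
    then show ?thesis by simp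
  qed
qed

lemma finite_rank_weakly_null_tendsto_zero:
  assumes "bounded_linear T" and "finite_rank T" and "weakly_null y"
  shows "(\<lambda>n. T (y n)) \<longlonglongrightarrow> 0"
  using assms weakly_null_tendsto_zero_span_finite unfolding finite_rank_def by blast

section \<open>Grunblum's criterion\<close>

lemma eventually_sum_eq_if_in_span:
  fixes x :: "nat \<Rightarrow> 'a::real_vector"
  assumes "v \<in> span (range x)"
  shows "\<exists>c. \<forall>\<^sub>F n in sequentially. (\<Sum>i<n. c i *\<^sub>R x i) = v"
  using assms
proof (induction rule: span_induct_alt)
  case base
  show ?case by (intro exI[of _ "\<lambda>_. 0"]) simp
next
  case (step q u w)
  then obtain c j where c: "\<forall>\<^sub>F n in sequentially. (\<Sum>i<n. c i *\<^sub>R x i) = w" and "u = x j"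
    by blast
  define c' where "c' i = c i + (if i = j then q else 0)" for i
  have "(\<Sum>i<n. c' i *\<^sub>R x i) = q *\<^sub>R u + w" if "(\<Sum>i<n. c i *\<^sub>R x i) = w" "j < n" for n
    using that \<open>u = x j\<close> by (simp add: c'_def scaleR_add_left sum.distrib if_distrib[of "\<lambda>r. r *\<^sub>R _"] cong: if_cong)
  then have "\<forall>\<^sub>F n in sequentially. (\<Sum>i<n. c' i *\<^sub>R x i) = q *\<^sub>R u + w"
    using eventually_conj[OF c eventually_gt_at_top[of j]] by (auto elim: eventually_mono)
  then show ?case by blast
qed

definition grunblum_condition :: "real \<Rightarrow> (nat \<Rightarrow> 'a::real_normed_vector) \<Rightarrow> bool" where
  "grunblum_condition K x \<longleftrightarrow>
     (\<forall>c m n. m \<le> n \<longrightarrow> norm (\<Sum>i<m. c i *\<^sub>R x i) \<le> K * norm (\<Sum>i<n. c i *\<^sub>R x i))"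

lemma grunblum_conditionD:
  "grunblum_condition K x \<Longrightarrow> m \<le> n \<Longrightarrow> norm (\<Sum>i<m. c i *\<^sub>R x i) \<le> K * norm (\<Sum>i<n. c i *\<^sub>R x i)"
  unfolding grunblum_condition_def by blast

lemma abs_coeff_mult_le_partial_sums:
  fixes x :: "nat \<Rightarrow> 'a::real_normed_vector"
  assumes "a \<le> norm (x i)"
  shows "\<bar>c i\<bar> * a \<le> norm (\<Sum>k<Suc i. c k *\<^sub>R x k) + norm (\<Sum>k<i. c k *\<^sub>R x k)"
proof -
  have "\<bar>c i\<bar> * a \<le> \<bar>c i\<bar> * norm (x i)" using assms by (simp add: mult_left_mono)
  also have "\<dots> = norm ((\<Sum>k<Suc i. c k *\<^sub>R x k) - (\<Sum>k<i. c k *\<^sub>R x k))" by simp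
  also have "\<dots> \<le> norm (\<Sum>k<Suc i. c k *\<^sub>R x k) + norm (\<Sum>k<i. c k *\<^sub>R x k)"
    by (rule norm_triangle_ineq4)
  finally show ?thesis .
qed

lemma grunblum_coeff_bound:
  fixes x :: "nat \<Rightarrow> 'a::real_normed_vector"
  assumes G: "grunblum_condition K x" and "a \<le> norm (x i)" and "i < n"
  shows "\<bar>c i\<bar> * a \<le> 2 * K * norm (\<Sum>i<n. c i *\<^sub>R x i)"
  using abs_coeff_mult_le_partial_sums[where x = x and c = c, OF assms(2)]
    grunblum_conditionD[OF G, of "Suc i" n c] grunblum_conditionD[OF G, of i n c] \<open>i < n\<close>
  by simp

lemma grunblum_expansion_unique:
  fixes x :: "nat \<Rightarrow> 'a::real_normed_vector"
  assumes G: "grunblum_condition K x" and ax: "\<And>i. a \<le> norm (x i)" and "a > 0"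
    and c: "(\<lambda>n. \<Sum>i<n. c i *\<^sub>R x i) \<longlonglongrightarrow> z" and d: "(\<lambda>n. \<Sum>i<n. d i *\<^sub>R x i) \<longlonglongrightarrow> z"
  shows "c = d"
proof
  fix i
  have "(\<lambda>n. \<Sum>i<n. (c i - d i) *\<^sub>R x i) \<longlonglongrightarrow> 0"
    using tendsto_diff[OF c d] by (simp add: scaleR_diff_left sum_subtractf)
  then have "(\<lambda>n. 2 * K * norm (\<Sum>i<n. (c i - d i) *\<^sub>R x i)) \<longlonglongrightarrow> 0"
    by (intro tendsto_mult_right_zero tendsto_norm_zero)
  moreover have "\<forall>\<^sub>F n in sequentially. \<bar>c i - d i\<bar> * a \<le> 2 * K * norm (\<Sum>i<n. (c i - d i) *\<^sub>R x i)"
    using eventually_gt_at_top[of i] by eventually_elim (rule grunblum_coeff_bound[OF G ax])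
  ultimately have "\<bar>c i - d i\<bar> * a \<le> 0"
    by (intro tendsto_le[OF trivial_limit_sequentially _ tendsto_const])
  then show "c i = d i" using \<open>a > 0\<close> by (simp add: mult_le_0_iff)
qed

lemma grunblum_coeffs_converge:
  fixes x :: "nat \<Rightarrow> 'a::real_normed_vector"
  assumes G: "grunblum_condition K x" and ax: "\<And>i. a \<le> norm (x i)" and "a > 0" and "0 \<le> K"
    and "Cauchy w" and cc: "\<And>k. \<forall>\<^sub>F n in sequentially. (\<Sum>i<n. cc k i *\<^sub>R x i) = w k"
  shows "\<exists>c. \<forall>i. (\<lambda>k. cc k i) \<longlonglongrightarrow> c i"
proof -
  have coeff_diff: "\<bar>cc k i - cc l i\<bar> * a \<le> 2 * K * norm (w k - w l)" for k l i
  proof -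
    have "\<forall>\<^sub>F n in sequentially. i < n \<and> (\<Sum>i<n. (cc k i - cc l i) *\<^sub>R x i) = w k - w l"
      using eventually_conj[OF eventually_gt_at_top[of i] eventually_conj[OF cc[of k] cc[of l]]]
      by eventually_elim (simp add: scaleR_diff_left sum_subtractf)
    then obtain n where n: "i < n" and eq: "(\<Sum>i<n. (cc k i - cc l i) *\<^sub>R x i) = w k - w l"
      using eventually_happens'[OF sequentially_bot] by blast
    show ?thesis
      using grunblum_coeff_bound[OF G ax n, where c = "\<lambda>i. cc k i - cc l i"] unfolding eq .
  qed
  have "Cauchy (\<lambda>k. cc k i)" for i
    using Cauchy_if_dominated[OF \<open>Cauchy w\<close> \<open>a > 0\<close> _ coeff_diff] \<open>0 \<le> K\<close> by simp
  then have "\<forall>i. \<exists>l. (\<lambda>k. cc k i) \<longlonglongrightarrow> l" by (simp add: Cauchy_convergent_iff convergent_def)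
  then show ?thesis by (rule choice)
qed

lemma grunblum_tail_bound:
  fixes x :: "nat \<Rightarrow> 'a::real_normed_vector"
  assumes G: "grunblum_condition K x" and "w \<longlonglongrightarrow> z"
    and cc: "\<And>k. \<forall>\<^sub>F n in sequentially. (\<Sum>i<n. cc k i *\<^sub>R x i) = w k"
    and c: "\<And>i. (\<lambda>k. cc k i) \<longlonglongrightarrow> c i"
  shows "norm (\<Sum>i<m. (c i - cc k i) *\<^sub>R x i) \<le> K * norm (z - w k)"
proof (rule tendsto_le[OF trivial_limit_sequentially])
  show "(\<lambda>l. K * norm (w l - w k)) \<longlonglongrightarrow> K * norm (z - w k)"
    by (intro tendsto_intros \<open>w \<longlonglongrightarrow> z\<close>)
  show "(\<lambda>l. norm (\<Sum>i<m. (cc l i - cc k i) *\<^sub>R x i)) \<longlonglongrightarrow> norm (\<Sum>i<m. (c i - cc k i) *\<^sub>R x i)"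
    by (intro tendsto_intros c)
  show "\<forall>\<^sub>F l in sequentially. norm (\<Sum>i<m. (cc l i - cc k i) *\<^sub>R x i) \<le> K * norm (w l - w k)"
  proof (rule always_eventually, rule allI)
    fix l
    have "\<forall>\<^sub>F n in sequentially. m \<le> n \<and> (\<Sum>i<n. (cc l i - cc k i) *\<^sub>R x i) = w l - w k"
      using eventually_conj[OF eventually_ge_at_top[of m] eventually_conj[OF cc[of l] cc[of k]]]
      by eventually_elim (simp add: scaleR_diff_left sum_subtractf)
    then obtain n where n: "m \<le> n" and eq: "(\<Sum>i<n. (cc l i - cc k i) *\<^sub>R x i) = w l - w k"
      using eventually_happens'[OF sequentially_bot] by blast
    show "norm (\<Sum>i<m. (cc l i - cc k i) *\<^sub>R x i) \<le> K * norm (w l - w k)"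
      using grunblum_conditionD[OF G n, where c = "\<lambda>i. cc l i - cc k i"] unfolding eq .
  qed
qed

lemma grunblum_expansion_exists:
  fixes x :: "nat \<Rightarrow> 'a::real_normed_vector"
  assumes G: "grunblum_condition K x" and ax: "\<And>i. a \<le> norm (x i)" and "a > 0" and "0 \<le> K"
    and "z \<in> closure (span (range x))"
  shows "\<exists>c. (\<lambda>n. \<Sum>i<n. c i *\<^sub>R x i) \<longlonglongrightarrow> z"
proof -
  obtain w where w: "\<And>k. w k \<in> span (range x)" "w \<longlonglongrightarrow> z"
    using \<open>z \<in> closure (span (range x))\<close> closure_sequential by blast
  obtain cc where cc: "\<And>k. \<forall>\<^sub>F n in sequentially. (\<Sum>i<n. cc k i *\<^sub>R x i) = w k"
    using eventually_sum_eq_if_in_span[OF w(1)] by metis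
  obtain c where c: "\<And>i. (\<lambda>k. cc k i) \<longlonglongrightarrow> c i"
    using grunblum_coeffs_converge[OF G ax \<open>a > 0\<close> \<open>0 \<le> K\<close> LIMSEQ_imp_Cauchy[OF w(2)] cc] by blast
  have "(\<lambda>n. \<Sum>i<n. c i *\<^sub>R x i) \<longlonglongrightarrow> z"
  proof (rule LIMSEQ_I)
    fix r :: real assume "r > 0"
    then obtain k where k: "norm (w k - z) < r / (K + 1)"
      using LIMSEQ_D[OF w(2), of "r / (K + 1)"] \<open>0 \<le> K\<close> by auto
    obtain N where N: "\<And>n. n \<ge> N \<Longrightarrow> (\<Sum>i<n. cc k i *\<^sub>R x i) = w k"
      using cc[of k] unfolding eventually_sequentially by blast
    show "\<exists>N. \<forall>n\<ge>N. norm ((\<Sum>i<n. c i *\<^sub>R x i) - z) < r"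
    proof (intro exI allI impI)
      fix n assume "n \<ge> N"
      then have "(\<Sum>i<n. c i *\<^sub>R x i) - z = (\<Sum>i<n. (c i - cc k i) *\<^sub>R x i) + (w k - z)"
        using N by (simp add: scaleR_diff_left sum_subtractf)
      then have "norm ((\<Sum>i<n. c i *\<^sub>R x i) - z) \<le> norm (\<Sum>i<n. (c i - cc k i) *\<^sub>R x i) + norm (w k - z)"
        by (metis norm_triangle_ineq)
      also have "\<dots> \<le> K * norm (z - w k) + norm (w k - z)"
        using grunblum_tail_bound[OF G w(2) cc c, where m = n and k = k] by simp
      also have "\<dots> = (K + 1) * norm (w k - z)" by (simp add: norm_minus_commute algebra_simps)
      also have "\<dots> < r" using k \<open>0 \<le> K\<close> by (simp add: field_simps)
      finally show "norm ((\<Sum>i<n. c i *\<^sub>R x i) - z) < r" .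
    qed
  qed
  then show ?thesis by blast
qed

lemma basic_seq_if_grunblum:
  fixes x :: "nat \<Rightarrow> 'a::real_normed_vector"
  assumes G: "grunblum_condition K x" and ax: "\<And>i. a \<le> norm (x i)" and "a > 0"
  shows "basic_seq x"
proof -
  have "norm (x 0) \<le> K * norm (x 0)" using grunblum_conditionD[OF G, of 1 1 "\<lambda>_. 1"] by simp
  moreover have "0 < norm (x 0)" using ax[of 0] \<open>a > 0\<close> by linarith
  ultimately have "0 \<le> K" by (simp add: mult_le_cancel_right1)
  show ?thesis unfolding basic_seq_def
  proof (intro ballI ex_ex1I)
    fix z assume "z \<in> closure (span (range x))"
    then show "\<exists>c. (\<lambda>n. \<Sum>i<n. c i *\<^sub>R x i) \<longlonglongrightarrow> z"
      using grunblum_expansion_exists[OF G ax \<open>a > 0\<close> \<open>0 \<le> K\<close>] by blast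
  next
    fix z c d
    assume "(\<lambda>n. \<Sum>i<n. c i *\<^sub>R x i) \<longlonglongrightarrow> z" "(\<lambda>n. \<Sum>i<n. d i *\<^sub>R x i) \<longlonglongrightarrow> z"
    then show "c = d" using grunblum_expansion_unique[OF G ax \<open>a > 0\<close>] by blast
  qed
qed

section \<open>Almost biorthogonal projections\<close>

lemma norm_le_if_onorm_le:
  assumes "bounded_linear T" and "onorm T \<le> lam"
  shows "norm (T x) \<le> lam * norm x"
  using onorm[OF assms(1), of x] assms(2) by (meson mult_right_mono norm_ge_zero order_trans)

lemma partial_sum_almost_projection:
  fixes x :: "nat \<Rightarrow> 'a::real_normed_vector"
  assumes "bounded_linear Q" and "p < n"
    and approx_id: "\<And>i. i \<le> p \<Longrightarrow> norm (x i - Q (x i)) \<le> \<delta> i"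
    and small: "\<And>i. p < i \<Longrightarrow> norm (Q (x i)) \<le> \<delta> i"
  shows "norm ((\<Sum>i<Suc p. c i *\<^sub>R x i) - Q (\<Sum>i<n. c i *\<^sub>R x i)) \<le> (\<Sum>i<n. \<bar>c i\<bar> * \<delta> i)"
proof -
  interpret Q: bounded_linear Q by fact
  define e where "e i = (if i \<le> p then c i *\<^sub>R (x i - Q (x i)) else - (c i *\<^sub>R Q (x i)))" for i
  have "{..<n} \<inter> {..p} = {..p}" using \<open>p < n\<close> by auto
  then have "(\<Sum>i<Suc p. c i *\<^sub>R x i) = (\<Sum>i<n. if i \<le> p then c i *\<^sub>R x i else 0)"
    using sum.inter_restrict[of "{..<n}" "\<lambda>i. c i *\<^sub>R x i" "{..p}"] by (simp add: lessThan_Suc_atMost)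
  then have "(\<Sum>i<Suc p. c i *\<^sub>R x i) - Q (\<Sum>i<n. c i *\<^sub>R x i)
      = (\<Sum>i<n. (if i \<le> p then c i *\<^sub>R x i else 0) - c i *\<^sub>R Q (x i))"
    by (simp add: Q.sum Q.scaleR sum_subtractf)
  also have "\<dots> = (\<Sum>i<n. e i)" by (intro sum.cong) (auto simp: e_def algebra_simps)
  also have "norm \<dots> \<le> (\<Sum>i<n. norm (e i))" by (rule norm_sum)
  also have "\<dots> \<le> (\<Sum>i<n. \<bar>c i\<bar> * \<delta> i)"
    using approx_id small by (intro sum_mono) (auto simp: e_def mult_left_mono)
  finally show ?thesis .
qed

lemma grunblum_condition_if_almost_projections:
  fixes x :: "nat \<Rightarrow> 'a::real_normed_vector" and Q :: "nat \<Rightarrow> 'a \<Rightarrow> 'a"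
  assumes Q: "\<And>i. bounded_linear (Q i)" "\<And>i. onorm (Q i) \<le> lam"
    and ax: "\<And>i. a \<le> norm (x i)" and "a > 0"
    and small: "\<And>i j. j < i \<Longrightarrow> norm (Q j (x i)) \<le> \<delta> i"
    and approx_id: "\<And>i j. j \<le> i \<Longrightarrow> norm (x j - Q i (x j)) \<le> \<delta> i"
    and "decseq \<delta>" and \<delta>_sum: "\<And>n. (\<Sum>i<n. \<delta> i) \<le> a / 4"
  shows "grunblum_condition (2 * lam) x"
  unfolding grunblum_condition_def
proof (intro allI impI)
  fix c :: "nat \<Rightarrow> real" and m n :: nat assume "m \<le> n"
  define S where "S k = (\<Sum>i<k. c i *\<^sub>R x i)" for k
  define M where "M = Max ((\<lambda>k. norm (S k)) ` {..n})"
  have M_ge: "norm (S k) \<le> M" if "k \<le> n" for k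
    unfolding M_def using that by (intro Max_ge) auto
  have "M \<in> (\<lambda>k. norm (S k)) ` {..n}" unfolding M_def by (intro Max_in) auto
  then obtain k where "k \<le> n" and M: "M = norm (S k)" by auto
  have "0 \<le> lam" using onorm_pos_le[OF Q(1)] Q(2) order_trans by blast
  have \<delta>_nonneg: "0 \<le> \<delta> i" for i using approx_id[of i i] norm_ge_zero order_trans by blast
  have approx_id': "norm (x j - Q i (x j)) \<le> \<delta> j" if "j \<le> i" for i j
    using approx_id[OF that] decseqD[OF \<open>decseq \<delta>\<close> that] by linarith
  have coeff: "\<bar>c i\<bar> \<le> 2 * M / a" if "i < n" for i
    using abs_coeff_mult_le_partial_sums[where x = x and c = c and i = i, OF ax] M_ge[of "Suc i"] M_ge[of i] that \<open>a > 0\<close>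
    by (simp add: S_def field_simps)
  have "(\<Sum>i<n. \<bar>c i\<bar> * \<delta> i) \<le> (\<Sum>i<n. 2 * M / a * \<delta> i)"
    by (intro sum_mono mult_right_mono coeff \<delta>_nonneg) auto
  also have "\<dots> = 2 * M / a * (\<Sum>i<n. \<delta> i)" by (simp add: sum_distrib_left)
  also have "\<dots> \<le> 2 * M / a * (a / 4)"
    using \<delta>_sum M \<open>a > 0\<close> by (intro mult_left_mono) auto
  finally have error: "(\<Sum>i<n. \<bar>c i\<bar> * \<delta> i) \<le> M / 2" using \<open>a > 0\<close> by simp
  have "M \<le> lam * norm (S n) + M / 2"
  proof (cases k)
    case 0
    then show ?thesis using M \<open>0 \<le> lam\<close> by (simp add: S_def)
  next
    case (Suc p)
    have "norm (S (Suc p) - Q p (S n)) \<le> (\<Sum>i<n. \<bar>c i\<bar> * \<delta> i)"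
      unfolding S_def by (rule partial_sum_almost_projection[OF Q(1)])
        (use \<open>k \<le> n\<close> Suc small approx_id' in auto)
    then have "norm (S k - Q p (S n)) \<le> M / 2" using error Suc by simp
    moreover have "norm (Q p (S n)) \<le> lam * norm (S n)" by (rule norm_le_if_onorm_le[OF Q])
    ultimately show ?thesis using M norm_triangle_sub[of "S k" "Q p (S n)"] by linarith
  qed
  then show "norm (\<Sum>i<m. c i *\<^sub>R x i) \<le> 2 * lam * norm (\<Sum>i<n. c i *\<^sub>R x i)"
    using M_ge[OF \<open>m \<le> n\<close>] by (simp add: S_def)
qed

section \<open>The gliding hump\<close>

lemma directed_setD:
  assumes "directed_set D le"
  shows directed_set_nonempty: "D \<noteq> {}"
    and directed_set_refl: "a \<in> D \<Longrightarrow> le a a"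
    and directed_set_trans: "\<lbrakk>a \<in> D; b \<in> D; c \<in> D; le a b; le b c\<rbrakk> \<Longrightarrow> le a c"
    and directed_set_upper: "\<lbrakk>a \<in> D; b \<in> D\<rbrakk> \<Longrightarrow> \<exists>c\<in>D. le a c \<and> le b c"
  using assms unfolding directed_set_def by blast+

lemma directed_set_finite_upper_bound:
  assumes D: "directed_set D le" and "finite F" and "F \<subseteq> D"
  shows "\<exists>c\<in>D. \<forall>a\<in>F. le a c"
  using assms(2,3)
proof (induction F rule: finite_induct)
  case empty
  then show ?case using directed_set_nonempty[OF D] by auto
next
  case (insert b F)
  obtain c where c: "c \<in> D" "\<forall>a\<in>F. le a c" using insert by auto
  then obtain c' where c': "c' \<in> D" "le b c'" "le c c'"
    using directed_set_upper[OF D, of b c] insert.prems by auto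
  have "\<forall>a\<in>F. le a c'" using directed_set_trans[OF D] c c' insert.prems by blast
  then show ?case using c' by auto
qed

lemma directed_upper_bound_approximating:
  fixes P :: "'d \<Rightarrow> 'a::real_normed_vector \<Rightarrow> 'a"
  assumes D: "directed_set D le" and conv: "\<forall>x. net_tendsto D le (\<lambda>a. P a x) x"
    and "finite F" "F \<subseteq> D" "finite V" "e > 0"
  shows "\<exists>b\<in>D. (\<forall>a\<in>F. le a b) \<and> (\<forall>v\<in>V. norm (v - P b v) < e)"
proof -
  have "\<forall>v. \<exists>a0\<in>D. \<forall>a\<in>D. le a0 a \<longrightarrow> dist (P a v) v < e"
    using conv \<open>e > 0\<close> unfolding net_tendsto_def by blast
  then obtain g where g: "\<And>v. g v \<in> D" "\<And>v a. a \<in> D \<Longrightarrow> le (g v) a \<Longrightarrow> dist (P a v) v < e"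
    by metis
  obtain b where b: "b \<in> D" "\<forall>a\<in>F \<union> g ` V. le a b"
    using directed_set_finite_upper_bound[OF D, of "F \<union> g ` V"] assms g(1) by auto
  have "\<forall>v\<in>V. norm (v - P b v) < e"
    using g(2)[OF b(1)] b(2) by (simp add: dist_norm norm_minus_commute)
  then show ?thesis using b by blast
qed

lemma gliding_hump_step:
  fixes P :: "'d \<Rightarrow> 'a::real_normed_vector \<Rightarrow> 'a" and y d :: "nat \<Rightarrow> 'a"
  assumes D: "directed_set D le" and conv: "\<forall>x. net_tendsto D le (\<lambda>a. P a x) x"
    and null: "\<And>\<alpha>. \<alpha> \<in> D \<Longrightarrow> (\<lambda>n. P \<alpha> (y n)) \<longlonglongrightarrow> 0"
    and \<beta>: "\<forall>j<i. \<beta> j \<in> D" and "e > 0"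
  shows "\<exists>m b. b \<in> D \<and>
    (\<forall>j<i. n j < m \<and> le (\<beta> j) b \<and> norm (P (\<beta> j) (y m)) < e \<and> norm (y (n j) - P b (y (n j))) < e) \<and>
    norm (y m - P b (y m)) < e \<and> (\<forall>j\<le>i. norm (d j - P b (d j)) < e)"
proof -
  have "\<forall>\<^sub>F m in sequentially. n j < m \<and> norm (P (\<beta> j) (y m)) < e" if "j < i" for j
  proof -
    have "\<beta> j \<in> D" using \<beta> that by blast
    then show ?thesis using eventually_conj[OF eventually_gt_at_top[of "n j"]
        order_tendstoD(2)[OF tendsto_norm_zero[OF null] \<open>e > 0\<close>]] by simp
  qed
  then have "\<forall>\<^sub>F m in sequentially. \<forall>j\<in>{..<i}. n j < m \<and> norm (P (\<beta> j) (y m)) < e"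
    by (intro eventually_ball_finite) auto
  then obtain m where m: "\<forall>j\<in>{..<i}. n j < m \<and> norm (P (\<beta> j) (y m)) < e"
    using eventually_happens'[OF sequentially_bot] by blast
  obtain b where "b \<in> D" "\<forall>a\<in>\<beta> ` {..<i}. le a b"
    "\<forall>v\<in>insert (y m) ((\<lambda>j. y (n j)) ` {..<i} \<union> d ` {..i}). norm (v - P b v) < e"
    using directed_upper_bound_approximating[OF D conv, of "\<beta> ` {..<i}"
        "insert (y m) ((\<lambda>j. y (n j)) ` {..<i} \<union> d ` {..i})" e] \<beta> \<open>e > 0\<close> by auto
  then show ?thesis using m by (intro exI[of _ m] exI[of _ b]) auto
qed

lemma nat_history_choice:
  fixes R :: "nat \<Rightarrow> (nat \<Rightarrow> 'a) \<Rightarrow> 'a \<Rightarrow> bool"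
  assumes "\<And>i h. \<exists>x. R i h x"
  shows "\<exists>f. \<forall>i. R i (\<lambda>j. if j < i then f j else undefined) (f i)"
proof -
  obtain r where r: "\<And>i h. R i h (r i h)" using assms by metis
  define history where "history = rec_nat (\<lambda>j. undefined) (\<lambda>i h. h(i := r i h))"
  define f where "f i = r i (history i)" for i
  have "history i = (\<lambda>j. if j < i then f j else undefined)" for i
    by (induction i) (auto simp: history_def f_def fun_eq_iff less_Suc_eq)
  then show ?thesis using r unfolding f_def by metis
qed

lemma gliding_hump_selection:
  fixes P :: "'d \<Rightarrow> 'a::real_normed_vector \<Rightarrow> 'a" and y d :: "nat \<Rightarrow> 'a"
  assumes D: "directed_set D le" and conv: "\<forall>x. net_tendsto D le (\<lambda>a. P a x) x"
    and null: "\<And>\<alpha>. \<alpha> \<in> D \<Longrightarrow> (\<lambda>n. P \<alpha> (y n)) \<longlonglongrightarrow> 0"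
    and \<delta>: "\<And>i. 0 < \<delta> i"
  obtains \<beta> n where "\<And>i. \<beta> i \<in> D" and "\<And>i j. i \<le> j \<Longrightarrow> le (\<beta> i) (\<beta> j)" and "strict_mono n"
    and "\<And>i j. j < i \<Longrightarrow> norm (P (\<beta> j) (y (n i))) < \<delta> i"
    and "\<And>i j. j \<le> i \<Longrightarrow> norm (y (n j) - P (\<beta> i) (y (n j))) < \<delta> i"
    and "\<And>i j. j \<le> i \<Longrightarrow> norm (d j - P (\<beta> i) (d j)) < \<delta> i"
proof -
  (* R i h s: s = (n i, beta i) is an admissible next choice after the choices h j, j < i.
     The premise on h makes R i h satisfiable for every h, as nat_history_choice demands. *)
  define R where "R i h s \<longleftrightarrow> (\<forall>j<i. snd (h j) \<in> D) \<longrightarrow> snd s \<in> D \<and>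
      (\<forall>j<i. fst (h j) < fst s \<and> le (snd (h j)) (snd s) \<and> norm (P (snd (h j)) (y (fst s))) < \<delta> i \<and>
        norm (y (fst (h j)) - P (snd s) (y (fst (h j)))) < \<delta> i) \<and>
      norm (y (fst s) - P (snd s) (y (fst s))) < \<delta> i \<and> (\<forall>j\<le>i. norm (d j - P (snd s) (d j)) < \<delta> i)"
    for i and h :: "nat \<Rightarrow> nat \<times> 'd" and s :: "nat \<times> 'd"
  have "\<exists>s. R i h s" for i h
  proof (cases "\<forall>j<i. snd (h j) \<in> D")
    case True
    have "\<exists>m b. R i h (m, b)"
      using gliding_hump_step[where n = "\<lambda>j. fst (h j)" and d = d, OF D conv null True \<delta>[of i]]
      unfolding R_def fst_conv snd_conv by blast
    then show ?thesis by blast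
  next
    case False
    then show ?thesis unfolding R_def by blast
  qed
  then obtain f where f: "\<And>i. R i (\<lambda>j. if j < i then f j else undefined) (f i)"
    using nat_history_choice[of R] by blast
  have in_D: "snd (f i) \<in> D" for i
  proof (induction i rule: less_induct)
    case (less i)
    then show ?case using f[of i] by (simp add: R_def)
  qed
  have increasing: "fst (f j) < fst (f i)" and above: "le (snd (f j)) (snd (f i))"
    and small: "norm (P (snd (f j)) (y (fst (f i)))) < \<delta> i"
    and approx_prev: "norm (y (fst (f j)) - P (snd (f i)) (y (fst (f j)))) < \<delta> i"
    if "j < i" for i j
    using f[of i] in_D that by (simp_all add: R_def)
  have approx_new: "norm (y (fst (f i)) - P (snd (f i)) (y (fst (f i)))) < \<delta> i"
    and approx_dense: "\<forall>j\<le>i. norm (d j - P (snd (f i)) (d j)) < \<delta> i" for i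
    using f[of i] in_D by (simp_all add: R_def)
  show thesis
  proof (rule that[of "\<lambda>i. snd (f i)" "\<lambda>i. fst (f i)"])
    show "le (snd (f i)) (snd (f j))" if "i \<le> j" for i j
    proof (cases "i = j")
      case True
      then show ?thesis using directed_set_refl[OF D in_D] by simp
    qed (use that above in simp)
    show "norm (y (fst (f j)) - P (snd (f i)) (y (fst (f j)))) < \<delta> i" if "j \<le> i" for i j
      using that approx_new approx_prev by (cases "j = i") simp_all
  qed (use in_D increasing small approx_dense in \<open>auto intro: strict_monoI\<close>)
qed

lemma average_tendsto_zero:
  fixes Q :: "nat \<Rightarrow> 'a::real_normed_vector \<Rightarrow> 'b::real_normed_vector"
  assumes "\<And>i. bounded_linear (Q i)" and small: "\<And>i j. j < i \<Longrightarrow> norm (Q j (x i)) \<le> \<delta> i"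
    and "decseq \<delta>" and "\<delta> \<longlonglongrightarrow> 0" and "1 \<le> N"
  shows "(\<lambda>i. norm (Q i ((1 / real N) *\<^sub>R (\<Sum>k=1..N. x (i + k))))) \<longlonglongrightarrow> 0"
proof (rule tendsto_sandwich[OF always_eventually always_eventually tendsto_const \<open>\<delta> \<longlonglongrightarrow> 0\<close>];
    intro allI)
  fix i
  interpret Q: bounded_linear "Q i" by fact
  have bound: "norm (Q i (x (i + k))) \<le> \<delta> i" if "1 \<le> k" for k
    using small[of i "i + k"] decseqD[OF \<open>decseq \<delta>\<close>, of i "i + k"] that by simp
  have "norm (Q i ((1 / real N) *\<^sub>R (\<Sum>k=1..N. x (i + k)))) = (1 / real N) * norm (\<Sum>k=1..N. Q i (x (i + k)))"
    by (simp add: Q.scaleR Q.sum)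
  also have "\<dots> \<le> (1 / real N) * (\<Sum>k=1..N. \<delta> i)"
    using bound by (intro mult_left_mono order_trans[OF norm_sum sum_mono]) auto
  also have "\<dots> = \<delta> i" using \<open>1 \<le> N\<close> by simp
  finally show "norm (Q i ((1 / real N) *\<^sub>R (\<Sum>k=1..N. x (i + k)))) \<le> \<delta> i" .
qed simp

lemma exists_positive_decseq_sum_le:
  fixes s :: real
  assumes "0 < s"
  shows "\<exists>\<delta>. (\<forall>i. 0 < \<delta> i) \<and> decseq \<delta> \<and> \<delta> \<longlonglongrightarrow> 0 \<and> (\<forall>n. (\<Sum>i<n. \<delta> i) \<le> s)"
proof (intro exI conjI allI)
  define \<delta> where "\<delta> i = s / 2 * (1 / 2) ^ i" for i :: nat
  show "0 < \<delta> i" for i using assms by (simp add: \<delta>_def)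
  show "decseq \<delta>"
    unfolding decseq_def \<delta>_def using assms by (auto intro: mult_left_mono power_decreasing)
  show "\<delta> \<longlonglongrightarrow> 0"
    unfolding \<delta>_def by (intro tendsto_mult_right_zero LIMSEQ_realpow_zero) auto
  show "(\<Sum>i<n. \<delta> i) \<le> s" for n
  proof -
    have "(\<Sum>i<n. \<delta> i) = s / 2 * (\<Sum>i<n. (1 / 2) ^ i)" by (simp add: \<delta>_def sum_distrib_left)
    also have "\<dots> = s * (1 - (1 / 2) ^ n)" by (simp add: sum_gp_strict)
    also have "\<dots> \<le> s" using assms by simp
    finally show ?thesis .
  qed
qed

lemma tendsto_on_closure_if_bounded:
  fixes Q :: "nat \<Rightarrow> 'a::real_normed_vector \<Rightarrow> 'a"
  assumes Q: "\<And>i. bounded_linear (Q i)" "\<And>i. onorm (Q i) \<le> lam"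
    and dense: "\<And>c. c \<in> C \<Longrightarrow> (\<lambda>i. Q i c) \<longlonglongrightarrow> c" and "x \<in> closure C"
  shows "(\<lambda>i. Q i x) \<longlonglongrightarrow> x"
proof (rule LIMSEQ_I)
  fix r :: real assume "r > 0"
  have "0 \<le> lam" using onorm_pos_le[OF Q(1)] Q(2) order_trans by blast
  define e where "e = r / (2 * (lam + 1))"
  have "e > 0" and e: "(lam + 1) * e = r / 2"
    using \<open>r > 0\<close> \<open>0 \<le> lam\<close> by (simp_all add: e_def field_simps)
  then obtain c where "c \<in> C" and "dist c x < e"
    using \<open>x \<in> closure C\<close> closure_approachable by blast
  then have c: "norm (x - c) < e" by (simp add: dist_norm norm_minus_commute)
  obtain N where N: "\<And>i. i \<ge> N \<Longrightarrow> norm (Q i c - c) < r / 2"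
    using LIMSEQ_D[OF dense[OF \<open>c \<in> C\<close>], of "r / 2"] \<open>r > 0\<close> by auto
  show "\<exists>N. \<forall>i\<ge>N. norm (Q i x - x) < r"
  proof (intro exI allI impI)
    fix i assume "N \<le> i"
    interpret Qi: bounded_linear "Q i" by (rule Q(1))
    have "Q i x - x = (Q i (x - c) + (Q i c - c)) - (x - c)" by (simp add: Qi.diff)
    then have "norm (Q i x - x) \<le> norm (Q i (x - c)) + norm (Q i c - c) + norm (x - c)"
      using norm_triangle_ineq4[of "Q i (x - c) + (Q i c - c)" "x - c"]
        norm_triangle_ineq[of "Q i (x - c)" "Q i c - c"] by simp
    also have "\<dots> \<le> (lam + 1) * norm (x - c) + norm (Q i c - c)"
      using norm_le_if_onorm_le[OF Q, of i "x - c"] by (simp add: algebra_simps)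
    also have "\<dots> < (lam + 1) * e + r / 2"
      using c N[OF \<open>N \<le> i\<close>] \<open>0 \<le> lam\<close> by (intro add_le_less_mono mult_left_mono) auto
    finally show "norm (Q i x - x) < r" using e by simp
  qed
qed

lemma norm_diff_tendsto_zero_on_closure:
  fixes Q :: "nat \<Rightarrow> 'a::real_normed_vector \<Rightarrow> 'a"
  assumes Q: "\<And>i. bounded_linear (Q i)" "\<And>i. onorm (Q i) \<le> lam" and "countable C"
    and approx: "\<And>i j. j \<le> i \<Longrightarrow> norm (from_nat_into C j - Q i (from_nat_into C j)) \<le> \<delta> i"
    and "\<delta> \<longlonglongrightarrow> 0" and "x \<in> closure C"
  shows "(\<lambda>i. norm (x - Q i x)) \<longlonglongrightarrow> 0"
proof -
  have "(\<lambda>i. Q i c) \<longlonglongrightarrow> c" if "c \<in> C" for c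
  proof -
    obtain j where j: "from_nat_into C j = c"
      using from_nat_into_surj[OF \<open>countable C\<close> \<open>c \<in> C\<close>] by blast
    have "\<forall>\<^sub>F i in sequentially. norm (Q i c - c) \<le> \<delta> i"
      using eventually_ge_at_top[of j] by eventually_elim (use approx j in \<open>auto simp: norm_minus_commute\<close>)
    then have "(\<lambda>i. Q i c - c) \<longlonglongrightarrow> 0" by (rule Lim_null_comparison[OF _ \<open>\<delta> \<longlonglongrightarrow> 0\<close>])
    then show ?thesis by (simp add: LIM_zero_iff)
  qed
  then have "(\<lambda>i. Q i x) \<longlonglongrightarrow> x"
    using tendsto_on_closure_if_bounded[where Q = Q, OF Q _ \<open>x \<in> closure C\<close>] by blast
  then show ?thesis using tendsto_norm_zero[OF LIM_zero] by (simp add: norm_minus_commute)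
qed

theorem lemma3p3:
  fixes P :: "'d \<Rightarrow> 'a::banach \<Rightarrow> 'a"
    and D :: "'d set" and le :: "'d \<Rightarrow> 'd \<Rightarrow> bool"
    and lam :: real and K :: "'a set" and y :: "nat \<Rightarrow> 'a"
  assumes "ext_approx_basis lam D le P"
    and "separable_set K"
    and "\<And>n. y n \<in> K"
    and "semi_normalized y"
    and "weakly_null y"
  shows "\<exists>\<beta> :: nat \<Rightarrow> 'd. \<exists>n :: nat \<Rightarrow> nat.
           (\<forall>i. \<beta> i \<in> D) \<and> (\<forall>i j. i \<le> j \<longrightarrow> le (\<beta> i) (\<beta> j)) \<and>
           strict_mono n \<and> basic_seq (\<lambda>i. y (n i)) \<and>
           (\<forall>N::nat. N \<ge> 1 \<longrightarrow>
              (\<lambda>i. norm (P (\<beta> i) ((1 / real N) *\<^sub>R (\<Sum>k=1..N. y (n (i + k)))))) \<longlonglongrightarrow> 0) \<and>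
           (\<lambda>i. norm (y (n i) - P (\<beta> i) (y (n i)))) \<longlonglongrightarrow> 0 \<and>
           (\<forall>x\<in>K. (\<lambda>i. norm (x - P (\<beta> i) x)) \<longlonglongrightarrow> 0)"
proof -
  from assms(1) have D: "directed_set D le" and conv: "\<forall>x. net_tendsto D le (\<lambda>a. P a x) x"
    and P: "\<And>\<alpha>. \<alpha> \<in> D \<Longrightarrow> bounded_linear (P \<alpha>) \<and> finite_rank (P \<alpha>) \<and> onorm (P \<alpha>) \<le> lam"
    unfolding ext_approx_basis_def by auto
  obtain a where "0 < a" and ay: "\<And>n. a \<le> norm (y n)"
    using assms(4) unfolding semi_normalized_def by blast
  obtain C where C: "countable C" "K \<subseteq> closure C"
    using assms(2) unfolding separable_set_def by blast
  obtain \<delta> where \<delta>: "\<And>i. 0 < \<delta> i" "decseq \<delta>" "\<delta> \<longlonglongrightarrow> 0" "\<And>n. (\<Sum>i<n. \<delta> i) \<le> a / 4"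
    using exists_positive_decseq_sum_le[of "a / 4"] \<open>0 < a\<close> by auto
  have null: "(\<lambda>n. P \<alpha> (y n)) \<longlonglongrightarrow> 0" if "\<alpha> \<in> D" for \<alpha>
    using P[OF that] assms(5) finite_rank_weakly_null_tendsto_zero by blast
  obtain \<beta> n where \<beta>: "\<And>i. \<beta> i \<in> D" "\<And>i j. i \<le> j \<Longrightarrow> le (\<beta> i) (\<beta> j)" and "strict_mono n"
    and small: "\<And>i j. j < i \<Longrightarrow> norm (P (\<beta> j) (y (n i))) < \<delta> i"
    and approx: "\<And>i j. j \<le> i \<Longrightarrow> norm (y (n j) - P (\<beta> i) (y (n j))) < \<delta> i"
    and dense: "\<And>i j. j \<le> i \<Longrightarrow> norm (from_nat_into C j - P (\<beta> i) (from_nat_into C j)) < \<delta> i"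
    using gliding_hump_selection[where \<delta> = \<delta> and d = "from_nat_into C", OF D conv null \<delta>(1)] by blast
  have Q: "\<And>i. bounded_linear (P (\<beta> i))" "\<And>i. onorm (P (\<beta> i)) \<le> lam" using P \<beta>(1) by auto
  have "grunblum_condition (2 * lam) (\<lambda>i. y (n i))"
    by (rule grunblum_condition_if_almost_projections[where Q = "\<lambda>i. P (\<beta> i)" and \<delta> = \<delta>])
      (use Q ay \<open>0 < a\<close> small approx \<delta>(2,4) in \<open>auto intro: less_imp_le\<close>)
  then have "basic_seq (\<lambda>i. y (n i))" by (rule basic_seq_if_grunblum) (use ay \<open>0 < a\<close> in auto)
  moreover have "(\<lambda>i. norm (P (\<beta> i) ((1 / real N) *\<^sub>R (\<Sum>k=1..N. y (n (i + k)))))) \<longlonglongrightarrow> 0"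
    if "N \<ge> 1" for N
    by (rule average_tendsto_zero[where Q = "\<lambda>i. P (\<beta> i)" and \<delta> = \<delta>])
      (use Q small \<delta>(2,3) that in \<open>auto intro: less_imp_le\<close>)
  moreover have "(\<lambda>i. norm (y (n i) - P (\<beta> i) (y (n i)))) \<longlonglongrightarrow> 0"
    by (rule Lim_null_comparison[OF always_eventually \<delta>(3)]) (use approx in \<open>auto intro: less_imp_le\<close>)
  moreover have "(\<lambda>i. norm (x - P (\<beta> i) x)) \<longlonglongrightarrow> 0" if "x \<in> K" for x
    by (rule norm_diff_tendsto_zero_on_closure[where Q = "\<lambda>i. P (\<beta> i)" and \<delta> = \<delta>])
      (use Q C dense \<delta>(3) that in \<open>auto intro: less_imp_le\<close>)
  ultimately show ?thesis using \<beta> \<open>strict_mono n\<close> by (intro exI[of _ \<beta>] exI[of _ n]) blast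
qed

end
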